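(* Let $E$ be a countable directed graph which is row-finite and has no sources, let $G$ be a discrete group acting on $E$ by graph automorphisms, and let $\varphi:G\times E^1\to G$ be a 1-cocycle with $\varphi(g,a)\cdot x=g\cdot x$ for all $g,a,x$. Then the following are equivalent: (1) for every $g\in G$ and every $x\in E^0$ there are only finitely many minimal strongly fixed paths for $g$ with range $x$; (2) the groupoid $\mathcal{G}_{\mathrm{tight}}^{(G,E)}$ is Hausdorff.
   Context: Conventions: paths $\alpha=\alpha_1\cdots\alpha_n$ with $s(\alpha_i)=r(\alpha_{i+1})$, $r(\alpha)=r(\alpha_1)$, $s(\alpha)=s(\alpha_n)$; row-finite without sources means $0<|r^{-1}(x)|<\infty$ for all vertices. 1-cocycle: $\varphi(gh,a)=\varphi(g,ha)\varphi(h,a)$; action and cocycle extend to finite paths by $g(a\alpha')=(ga)(\varphi(g,a)\alpha')$, $\varphi(g,a\alpha')=\varphi(\varphi(g,a),\alpha')$, and $\varphi(g,x)=g$ on vertices; $G$ acts on infinite paths analogously. A finite path $\alpha$ is strongly fixed by $g$ if $g\alpha=\alpha$ and $\varphi(g,\alpha)=1$; it is a minimal strongly fixed path for $g$ if moreover no proper prefix of $\alpha$ is strongly fixed by $g$. $\mathcal{G}_{\mathrm{tight}}^{(G,E)}$ is the groupoid of germs of the action of the inverse semigroup $\mathcal{S}_{G,E}=\{(\alpha,g,\beta):\alpha,\beta\in E^*,g\in G,s(\alpha)=g\,s(\beta)\}\cup\{0\}$ on its tight spectrum, which here is identified with the infinite path space $E^\infty$ (topology generated by cylinders $Z(\gamma)=\{\gamma\eta\}$),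 the action being $(\alpha,g,\beta)\cdot\beta\eta=\alpha(g\eta)$. Explicitly, its elements are germs $[\alpha,g,\beta;\xi]$ with $\xi\in Z(\beta)$, where $[s;\xi]=[t;\mu]$ iff $\xi=\mu$ and there is a nonzero idempotent $e=(\gamma,1,\gamma)$ with $e\cdot\xi=\xi$ and $se=te$ (products in $\mathcal{S}_{G,E}$: $(\alpha,g,\beta)(\gamma,h,\delta)$ equals $(\alpha,g\varphi(h,\varepsilon),\delta(h^{-1}\varepsilon))$ if $\beta=\gamma\varepsilon$, $(\alpha(g\varepsilon),\varphi(g,\varepsilon)h,\delta)$ if $\gamma=\beta\varepsilon$, $0$ otherwise); $s([\alpha,g,\beta;\beta\eta])=\beta\eta$, $r([\alpha,g,\beta;\beta\eta])=\alpha(g\eta)$; a basis of the topology is given by the sets $\{[\alpha,g,\beta;\xi]:\xi\in Z(\gamma)\}$. *)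

theory Defs
  imports "HOL-Algebra.Group" "HOL-Analysis.Analysis"
begin

text \<open>Finite paths are pairs (x, as): the range vertex x and the edge list as
  (the empty list gives the vertex x viewed as a path of length 0).\<close>

type_synonym ('v,'e) fpath = "'v \<times> 'e list"

definition row_finite_no_sources :: "('e \<Rightarrow> 'v) \<Rightarrow> bool" where
  "row_finite_no_sources r \<equiv> (\<forall>x. finite {a. r a = x} \<and> {a. r a = x} \<noteq> {})"

definition is_fpath :: "('e \<Rightarrow> 'v) \<Rightarrow> ('e \<Rightarrow> 'v) \<Rightarrow> ('v,'e) fpath \<Rightarrow> bool" where
  "is_fpath r s p \<equiv> (snd p \<noteq> [] \<longrightarrow> r (hd (snd p)) = fst p) \<and>
     (\<forall>i. Suc i < length (snd p) \<longrightarrow> s (snd p ! i) = r (snd p ! Suc i))"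

definition psrc :: "('e \<Rightarrow> 'v) \<Rightarrow> ('v,'e) fpath \<Rightarrow> 'v" where
  "psrc s p = (if snd p = [] then fst p else s (last (snd p)))"

definition pconcat :: "('v,'e) fpath \<Rightarrow> ('v,'e) fpath \<Rightarrow> ('v,'e) fpath" where
  "pconcat p q = (fst p, snd p @ snd q)"

fun act_list :: "('g \<Rightarrow> 'e \<Rightarrow> 'e) \<Rightarrow> ('g \<Rightarrow> 'e \<Rightarrow> 'g) \<Rightarrow> 'g \<Rightarrow> 'e list \<Rightarrow> 'e list" where
  "act_list ae phi g [] = []"
| "act_list ae phi g (a # as) = ae g a # act_list ae phi (phi g a) as"

fun phi_list :: "('g \<Rightarrow> 'e \<Rightarrow> 'g) \<Rightarrow> 'g \<Rightarrow> 'e list \<Rightarrow> 'g" where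
  "phi_list phi g [] = g"
| "phi_list phi g (a # as) = phi_list phi (phi g a) as"

definition act_path :: "('g \<Rightarrow> 'v \<Rightarrow> 'v) \<Rightarrow> ('g \<Rightarrow> 'e \<Rightarrow> 'e) \<Rightarrow> ('g \<Rightarrow> 'e \<Rightarrow> 'g)
    \<Rightarrow> 'g \<Rightarrow> ('v,'e) fpath \<Rightarrow> ('v,'e) fpath" where
  "act_path av ae phi g p = (av g (fst p), act_list ae phi g (snd p))"

definition phi_path :: "('g \<Rightarrow> 'e \<Rightarrow> 'g) \<Rightarrow> 'g \<Rightarrow> ('v,'e) fpath \<Rightarrow> 'g" where
  "phi_path phi g p = phi_list phi g (snd p)"

definition graph_action :: "'g monoid \<Rightarrow> ('e \<Rightarrow> 'v) \<Rightarrow> ('e \<Rightarrow> 'v)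
    \<Rightarrow> ('g \<Rightarrow> 'v \<Rightarrow> 'v) \<Rightarrow> ('g \<Rightarrow> 'e \<Rightarrow> 'e) \<Rightarrow> bool" where
  "graph_action G r s av ae \<equiv>
     av \<one>\<^bsub>G\<^esub> = id \<and> ae \<one>\<^bsub>G\<^esub> = id \<and>
     (\<forall>g\<in>carrier G. \<forall>h\<in>carrier G. av (g \<otimes>\<^bsub>G\<^esub> h) = av g \<circ> av h \<and> ae (g \<otimes>\<^bsub>G\<^esub> h) = ae g \<circ> ae h) \<and>
     (\<forall>g\<in>carrier G. bij (av g) \<and> bij (ae g)) \<and>
     (\<forall>g\<in>carrier G. \<forall>a. s (ae g a) = av g (s a) \<and> r (ae g a) = av g (r a))"

definition one_cocycle :: "'g monoid \<Rightarrow> ('g \<Rightarrow> 'e \<Rightarrow> 'e) \<Rightarrow> ('g \<Rightarrow> 'e \<Rightarrow> 'g) \<Rightarrow> bool" where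
  "one_cocycle G ae phi \<equiv>
     (\<forall>g\<in>carrier G. \<forall>a. phi g a \<in> carrier G) \<and>
     (\<forall>g\<in>carrier G. \<forall>h\<in>carrier G. \<forall>a.
        phi (g \<otimes>\<^bsub>G\<^esub> h) a = phi g (ae h a) \<otimes>\<^bsub>G\<^esub> phi h a)"

definition strongly_fixed :: "'g monoid \<Rightarrow> ('g \<Rightarrow> 'v \<Rightarrow> 'v) \<Rightarrow> ('g \<Rightarrow> 'e \<Rightarrow> 'e) \<Rightarrow> ('g \<Rightarrow> 'e \<Rightarrow> 'g)
    \<Rightarrow> 'g \<Rightarrow> ('v,'e) fpath \<Rightarrow> bool" where
  "strongly_fixed G av ae phi g p \<equiv> act_path av ae phi g p = p \<and> phi_path phi g p = \<one>\<^bsub>G\<^esub>"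

definition min_strongly_fixed :: "'g monoid \<Rightarrow> ('e \<Rightarrow> 'v) \<Rightarrow> ('e \<Rightarrow> 'v) \<Rightarrow> ('g \<Rightarrow> 'v \<Rightarrow> 'v)
    \<Rightarrow> ('g \<Rightarrow> 'e \<Rightarrow> 'e) \<Rightarrow> ('g \<Rightarrow> 'e \<Rightarrow> 'g) \<Rightarrow> 'g \<Rightarrow> ('v,'e) fpath \<Rightarrow> bool" where
  "min_strongly_fixed G r s av ae phi g p \<equiv>
     is_fpath r s p \<and> strongly_fixed G av ae phi g p \<and>
     (\<forall>k < length (snd p). \<not> strongly_fixed G av ae phi g (fst p, take k (snd p)))"

definition is_ipath :: "('e \<Rightarrow> 'v) \<Rightarrow> ('e \<Rightarrow> 'v) \<Rightarrow> (nat \<Rightarrow> 'e) \<Rightarrow> bool" where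
  "is_ipath r s \<xi> \<equiv> (\<forall>i. s (\<xi> i) = r (\<xi> (Suc i)))"

definition cyl :: "('e \<Rightarrow> 'v) \<Rightarrow> ('e \<Rightarrow> 'v) \<Rightarrow> ('v,'e) fpath \<Rightarrow> (nat \<Rightarrow> 'e) set" where
  "cyl r s \<gamma> = {\<xi>. is_ipath r s \<xi> \<and> r (\<xi> 0) = fst \<gamma> \<and> (\<forall>i < length (snd \<gamma>). \<xi> i = snd \<gamma> ! i)}"

text \<open>The inverse semigroup S_{G,E}: nonzero elements are triples (alpha,g,beta);
  the zero element is represented by None in products.\<close>

type_synonym ('v,'e,'g) selt = "('v,'e) fpath \<times> 'g \<times> ('v,'e) fpath"

definition valid_S :: "'g monoid \<Rightarrow> ('e \<Rightarrow> 'v) \<Rightarrow> ('e \<Rightarrow> 'v) \<Rightarrow> ('g \<Rightarrow> 'v \<Rightarrow> 'v)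
    \<Rightarrow> ('v,'e,'g) selt \<Rightarrow> bool" where
  "valid_S G r s av t \<equiv> (case t of (\<alpha>, g, \<beta>) \<Rightarrow>
     is_fpath r s \<alpha> \<and> is_fpath r s \<beta> \<and> g \<in> carrier G \<and> psrc s \<alpha> = av g (psrc s \<beta>))"

definition is_ext :: "('e \<Rightarrow> 'v) \<Rightarrow> ('e \<Rightarrow> 'v) \<Rightarrow> ('v,'e) fpath \<Rightarrow> ('v,'e) fpath \<Rightarrow> ('v,'e) fpath \<Rightarrow> bool" where
  "is_ext r s \<beta> \<gamma> \<epsilon> \<equiv> is_fpath r s \<epsilon> \<and> fst \<epsilon> = psrc s \<gamma> \<and> \<beta> = pconcat \<gamma> \<epsilon>"

definition sprod :: "'g monoid \<Rightarrow> ('e \<Rightarrow> 'v) \<Rightarrow> ('e \<Rightarrow> 'v) \<Rightarrow> ('g \<Rightarrow> 'v \<Rightarrow> 'v)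
    \<Rightarrow> ('g \<Rightarrow> 'e \<Rightarrow> 'e) \<Rightarrow> ('g \<Rightarrow> 'e \<Rightarrow> 'g)
    \<Rightarrow> ('v,'e,'g) selt \<Rightarrow> ('v,'e,'g) selt \<Rightarrow> ('v,'e,'g) selt option" where
  "sprod G r s av ae phi t u = (case t of (\<alpha>, g, \<beta>) \<Rightarrow> case u of (\<gamma>, h, \<delta>) \<Rightarrow>
     if (\<exists>\<epsilon>. is_ext r s \<beta> \<gamma> \<epsilon>) then
       (let \<epsilon> = (SOME \<epsilon>. is_ext r s \<beta> \<gamma> \<epsilon>) in
         Some (\<alpha>, g \<otimes>\<^bsub>G\<^esub> phi_path phi h \<epsilon>, pconcat \<delta> (act_path av ae phi (inv\<^bsub>G\<^esub> h) \<epsilon>)))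
     else if (\<exists>\<epsilon>. is_ext r s \<gamma> \<beta> \<epsilon>) then
       (let \<epsilon> = (SOME \<epsilon>. is_ext r s \<gamma> \<beta> \<epsilon>) in
         Some (pconcat \<alpha> (act_path av ae phi g \<epsilon>), phi_path phi g \<epsilon> \<otimes>\<^bsub>G\<^esub> h, \<delta>))
     else None)"

definition germ_reps :: "'g monoid \<Rightarrow> ('e \<Rightarrow> 'v) \<Rightarrow> ('e \<Rightarrow> 'v) \<Rightarrow> ('g \<Rightarrow> 'v \<Rightarrow> 'v)
    \<Rightarrow> (('v,'e,'g) selt \<times> (nat \<Rightarrow> 'e)) set" where
  "germ_reps G r s av = {(t, \<xi>). valid_S G r s av t \<and> \<xi> \<in> cyl r s (snd (snd t))}"

definition germ_rel :: "'g monoid \<Rightarrow> ('e \<Rightarrow> 'v) \<Rightarrow> ('e \<Rightarrow> 'v) \<Rightarrow> ('g \<Rightarrow> 'v \<Rightarrow> 'v)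
    \<Rightarrow> ('g \<Rightarrow> 'e \<Rightarrow> 'e) \<Rightarrow> ('g \<Rightarrow> 'e \<Rightarrow> 'g)
    \<Rightarrow> ((('v,'e,'g) selt \<times> (nat \<Rightarrow> 'e)) \<times> (('v,'e,'g) selt \<times> (nat \<Rightarrow> 'e))) set" where
  "germ_rel G r s av ae phi = {((t, \<xi>), (u, \<mu>)).
     (t, \<xi>) \<in> germ_reps G r s av \<and> (u, \<mu>) \<in> germ_reps G r s av \<and> \<xi> = \<mu> \<and>
     (\<exists>\<gamma>. is_fpath r s \<gamma> \<and> \<xi> \<in> cyl r s \<gamma> \<and>
        sprod G r s av ae phi t (\<gamma>, \<one>\<^bsub>G\<^esub>, \<gamma>) = sprod G r s av ae phi u (\<gamma>, \<one>\<^bsub>G\<^esub>, \<gamma>))}"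

definition germ :: "'g monoid \<Rightarrow> ('e \<Rightarrow> 'v) \<Rightarrow> ('e \<Rightarrow> 'v) \<Rightarrow> ('g \<Rightarrow> 'v \<Rightarrow> 'v)
    \<Rightarrow> ('g \<Rightarrow> 'e \<Rightarrow> 'e) \<Rightarrow> ('g \<Rightarrow> 'e \<Rightarrow> 'g)
    \<Rightarrow> ('v,'e,'g) selt \<Rightarrow> (nat \<Rightarrow> 'e) \<Rightarrow> (('v,'e,'g) selt \<times> (nat \<Rightarrow> 'e)) set" where
  "germ G r s av ae phi t \<xi> = germ_rel G r s av ae phi `` {(t, \<xi>)}"

definition tight_basic_opens :: "'g monoid \<Rightarrow> ('e \<Rightarrow> 'v) \<Rightarrow> ('e \<Rightarrow> 'v) \<Rightarrow> ('g \<Rightarrow> 'v \<Rightarrow> 'v)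
    \<Rightarrow> ('g \<Rightarrow> 'e \<Rightarrow> 'e) \<Rightarrow> ('g \<Rightarrow> 'e \<Rightarrow> 'g)
    \<Rightarrow> (('v,'e,'g) selt \<times> (nat \<Rightarrow> 'e)) set set set" where
  "tight_basic_opens G r s av ae phi =
     {{germ G r s av ae phi t \<xi> | \<xi>. \<xi> \<in> cyl r s (snd (snd t)) \<and> \<xi> \<in> cyl r s \<gamma>}
       | t \<gamma>. valid_S G r s av t \<and> is_fpath r s \<gamma>}"

definition tight_groupoid_topology :: "'g monoid \<Rightarrow> ('e \<Rightarrow> 'v) \<Rightarrow> ('e \<Rightarrow> 'v) \<Rightarrow> ('g \<Rightarrow> 'v \<Rightarrow> 'v)
    \<Rightarrow> ('g \<Rightarrow> 'e \<Rightarrow> 'e) \<Rightarrow> ('g \<Rightarrow> 'e \<Rightarrow> 'g)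
    \<Rightarrow> (('v,'e,'g) selt \<times> (nat \<Rightarrow> 'e)) set topology" where
  "tight_groupoid_topology G r s av ae phi =
     topology_generated_by (tight_basic_opens G r s av ae phi)"

end

theory Submission
  imports Defs
begin

text \<open>Two germs [t; \<xi>] and [u; \<xi>] coincide iff the products t(\<xi>|m, 1, \<xi>|m) and
  u(\<xi>|m, 1, \<xi>|m) agree for all large m. Past a level N at which both are defined, the cocycle
  identity shows that they agree at level m iff h'\<inverse> h strongly fixes the segment of \<xi> from N
  to m, where h and h' are their group entries at level N. If there are only finitely many, hence
  boundedly long, minimal strongly fixed paths, distinct germs over the same \<xi> therefore stay
  distinct over a whole cylinder around \<xi>, which yields disjoint basic neighbourhoods.
  Conversely, Koenig's lemma turns infinitely many minimal strongly fixed paths for g at x into an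
  infinite path \<xi> none of whose prefixes is strongly fixed, while every prefix extends to a
  strongly fixed path; the germs of (x, g, x) and (x, 1, x) at \<xi> then differ but cannot be
  separated.\<close>

lemma act_list_append:
  "act_list ae phi g (xs @ ys) = act_list ae phi g xs @ act_list ae phi (phi_list phi g xs) ys"
  by (induction xs arbitrary: g) auto

lemma phi_list_append: "phi_list phi g (xs @ ys) = phi_list phi (phi_list phi g xs) ys"
  by (induction xs arbitrary: g) auto

lemma length_act_list [simp]: "length (act_list ae phi g xs) = length xs"
  by (induction xs arbitrary: g) auto

lemma is_fpath_take: "is_fpath r s (v, z) \<Longrightarrow> is_fpath r s (v, take j z)"
  unfolding is_fpath_def by (auto simp: hd_take)

lemma is_fpath_append_Cons:
  assumes "is_fpath r s (x, l @ a # ys)"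
  shows "r a = psrc s (x, l)"
proof (cases "l = []")
  case True
  then show ?thesis using assms by (simp add: is_fpath_def psrc_def)
next
  case False
  have step: "s ((l @ a # ys) ! i) = r ((l @ a # ys) ! Suc i)" if "Suc i < length (l @ a # ys)" for i
    using assms that unfolding is_fpath_def snd_conv by blast
  from False step[of "length l - 1"] have "s (l ! (length l - 1)) = r a"
    by (simp add: nth_append)
  with False show ?thesis by (simp add: psrc_def last_conv_nth)
qed

definition ipath_prefix :: "('e \<Rightarrow> 'v) \<Rightarrow> (nat \<Rightarrow> 'e) \<Rightarrow> nat \<Rightarrow> ('v,'e) fpath" where
  "ipath_prefix r \<xi> n = (r (\<xi> 0), map \<xi> [0..<n])"

lemma fst_ipath_prefix [simp]: "fst (ipath_prefix r \<xi> n) = r (\<xi> 0)"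
  and snd_ipath_prefix [simp]: "snd (ipath_prefix r \<xi> n) = map \<xi> [0..<n]"
  by (simp_all add: ipath_prefix_def)

lemma is_fpath_segment: "is_ipath r s \<xi> \<Longrightarrow> is_fpath r s (r (\<xi> i), map \<xi> [i..<j])"
  unfolding is_fpath_def is_ipath_def by (auto simp: hd_map)

lemma is_fpath_ipath_prefix: "is_ipath r s \<xi> \<Longrightarrow> is_fpath r s (ipath_prefix r \<xi> n)"
  using is_fpath_segment[of r s \<xi> 0 n] by (simp add: ipath_prefix_def)

lemma psrc_ipath_prefix: "is_ipath r s \<xi> \<Longrightarrow> psrc s (ipath_prefix r \<xi> n) = r (\<xi> n)"
  by (cases n) (simp_all add: psrc_def is_ipath_def)

lemma ipath_prefix_eq_iff:
  "ipath_prefix r \<xi>' n = ipath_prefix r \<xi> n \<longleftrightarrow> r (\<xi>' 0) = r (\<xi> 0) \<and> (\<forall>i<n. \<xi>' i = \<xi> i)"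
  by (auto simp: ipath_prefix_def)

lemma ipath_prefix_eq_mono:
  "ipath_prefix r \<xi>' n = ipath_prefix r \<xi> n \<Longrightarrow> m \<le> n \<Longrightarrow> ipath_prefix r \<xi>' m = ipath_prefix r \<xi> m"
  by (simp add: ipath_prefix_eq_iff)

lemma list_eq_map_upt_iff: "l = map \<xi> [0..<length l] \<longleftrightarrow> (\<forall>i<length l. l ! i = \<xi> i)"
proof
  assume l: "l = map \<xi> [0..<length l]"
  show "\<forall>i<length l. l ! i = \<xi> i"
  proof (intro allI impI)
    fix i assume "i < length l"
    then have "map \<xi> [0..<length l] ! i = \<xi> i" by simp
    then show "l ! i = \<xi> i" using l by metis
  qed
qed (intro nth_equalityI; simp)

lemma cyl_iff: "\<xi> \<in> cyl r s \<gamma> \<longleftrightarrow> is_ipath r s \<xi> \<and> \<gamma> = ipath_prefix r \<xi> (length (snd \<gamma>))"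
proof -
  obtain a l where \<gamma>: "\<gamma> = (a, l)" by (cases \<gamma>)
  have "\<xi> \<in> cyl r s \<gamma> \<longleftrightarrow> is_ipath r s \<xi> \<and> a = r (\<xi> 0) \<and> (\<forall>i<length l. l ! i = \<xi> i)"
    unfolding \<gamma> cyl_def by auto
  also have "\<dots> \<longleftrightarrow> is_ipath r s \<xi> \<and> \<gamma> = ipath_prefix r \<xi> (length (snd \<gamma>))"
    unfolding \<gamma> ipath_prefix_def by (simp only: prod.inject snd_conv list_eq_map_upt_iff)
  finally show ?thesis .
qed

lemma cyl_ipath_prefix:
  "\<xi>' \<in> cyl r s (ipath_prefix r \<xi> n) \<longleftrightarrow> is_ipath r s \<xi>' \<and> ipath_prefix r \<xi>' n = ipath_prefix r \<xi> n"
  unfolding cyl_iff by auto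

lemma cyl_is_ipath: "\<xi> \<in> cyl r s \<gamma> \<Longrightarrow> is_ipath r s \<xi>"
  and cyl_eq_ipath_prefix: "\<xi> \<in> cyl r s \<gamma> \<Longrightarrow> \<gamma> = ipath_prefix r \<xi> (length (snd \<gamma>))"
  using cyl_iff by blast+

lemma ipath_in_cyl_ipath_prefix: "is_ipath r s \<xi> \<Longrightarrow> \<xi> \<in> cyl r s (ipath_prefix r \<xi> n)"
  by (simp add: cyl_ipath_prefix)

lemma cyl_subset_cyl_ipath_prefix:
  assumes "fst p = r (\<xi> 0)" "snd p = map \<xi> [0..<n] @ ys"
  shows "cyl r s p \<subseteq> cyl r s (ipath_prefix r \<xi> n)"
proof
  fix \<xi>' assume \<xi>': "\<xi>' \<in> cyl r s p"
  have "\<xi>' i = \<xi> i" if "i < n" for i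
  proof -
    have "\<forall>i<length (snd p). \<xi>' i = snd p ! i" using \<xi>' by (simp add: cyl_def)
    moreover have "i < length (snd p)" using that assms(2) by simp
    ultimately have "\<xi>' i = snd p ! i" by blast
    also have "\<dots> = \<xi> i" using that assms(2) by (simp add: nth_append)
    finally show ?thesis .
  qed
  moreover have "is_ipath r s \<xi>'" "r (\<xi>' 0) = r (\<xi> 0)" using \<xi>' assms(1) by (simp_all add: cyl_def)
  ultimately show "\<xi>' \<in> cyl r s (ipath_prefix r \<xi> n)"
    by (simp add: cyl_ipath_prefix ipath_prefix_eq_iff)
qed

lemma cyl_ipath_prefix_mono: "m \<le> n \<Longrightarrow> cyl r s (ipath_prefix r \<xi> n) \<subseteq> cyl r s (ipath_prefix r \<xi> m)"
  by (auto simp: cyl_ipath_prefix ipath_prefix_eq_iff)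

lemma cyl_ipath_prefix_subset:
  assumes "\<xi> \<in> cyl r s \<gamma>" "length (snd \<gamma>) \<le> n"
  shows "cyl r s (ipath_prefix r \<xi> n) \<subseteq> cyl r s \<gamma>"
proof
  fix \<xi>' assume "\<xi>' \<in> cyl r s (ipath_prefix r \<xi> n)"
  then have "is_ipath r s \<xi>'" "ipath_prefix r \<xi>' (length (snd \<gamma>)) = ipath_prefix r \<xi> (length (snd \<gamma>))"
    using assms(2) ipath_prefix_eq_mono by (auto simp: cyl_ipath_prefix)
  moreover have "\<gamma> = ipath_prefix r \<xi> (length (snd \<gamma>))"
    using assms(1) cyl_iff by blast
  ultimately show "\<xi>' \<in> cyl r s \<gamma>"
    unfolding cyl_iff by metis
qed

lemma is_ext_eq: "is_ext r s \<beta> \<gamma> \<epsilon> \<Longrightarrow> \<epsilon> = (psrc s \<gamma>, drop (length (snd \<gamma>)) (snd \<beta>))"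
  by (cases \<epsilon>) (auto simp: is_ext_def pconcat_def)

lemma some_ext: "is_ext r s \<beta> \<gamma> \<epsilon> \<Longrightarrow> (SOME \<epsilon>. is_ext r s \<beta> \<gamma> \<epsilon>) = \<epsilon>"
  by (metis (no_types, lifting) is_ext_eq someI)

definition extending :: "('v,'e) fpath set \<Rightarrow> 'e list \<Rightarrow> ('v,'e) fpath set" where
  "extending M l = {p \<in> M. \<exists>ys. snd p = l @ ys}"

locale row_finite_graph =
  fixes r s :: "'e \<Rightarrow> 'v"
  assumes row_finite_no_sources: "row_finite_no_sources r"
begin

lemma ex_edge_with_range: "\<exists>a. r a = v"
  using row_finite_no_sources unfolding row_finite_no_sources_def by blast

lemma finite_edges_with_range: "finite {a. r a = v}"
  using row_finite_no_sources unfolding row_finite_no_sources_def by blast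

lemma cyl_nonempty:
  assumes p: "is_fpath r s p"
  obtains \<xi> where "\<xi> \<in> cyl r s p"
proof -
  define next_edge where "next_edge v = (SOME a. r a = v)" for v
  have r_next_edge: "r (next_edge v) = v" for v
    unfolding next_edge_def by (rule someI_ex) (rule ex_edge_with_range)
  define tail :: "nat \<Rightarrow> 'e" where "tail = rec_nat (next_edge (psrc s p)) (\<lambda>_ a. next_edge (s a))"
  define l where "l = length (snd p)"
  define \<xi> where "\<xi> i = (if i < l then snd p ! i else tail (i - l))" for i
  have "s (\<xi> i) = r (\<xi> (Suc i))" for i
  proof -
    consider "Suc i < l" | "Suc i = l" | "l \<le> i" by linarith
    then show ?thesis
    proof cases
      case 1
      then show ?thesis using p unfolding is_fpath_def \<xi>_def l_def by simp
    next
      case 2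
      then have "snd p \<noteq> []" "length (snd p) = Suc i" unfolding l_def by auto
      then have "last (snd p) = snd p ! i" by (simp add: last_conv_nth)
      moreover have "i < l" "\<not> Suc i < l" "Suc i - l = 0" using 2 by auto
      ultimately show ?thesis by (simp add: \<xi>_def tail_def r_next_edge psrc_def \<open>snd p \<noteq> []\<close>)
    next
      case 3
      then have "Suc i - l = Suc (i - l)" by simp
      with 3 show ?thesis by (simp add: \<xi>_def tail_def r_next_edge)
    qed
  qed
  moreover have "r (\<xi> 0) = fst p"
    using p by (cases "l = 0") (auto simp: \<xi>_def l_def tail_def r_next_edge psrc_def
        is_fpath_def hd_conv_nth)
  ultimately have "\<xi> \<in> cyl r s p"
    by (simp add: cyl_def is_ipath_def \<xi>_def l_def)
  then show thesis by (rule that)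
qed

lemma infinite_extending_append_edge:
  assumes M: "\<And>p. p \<in> M \<Longrightarrow> is_fpath r s p \<and> fst p = x" and inf: "infinite (extending M l)"
  shows "\<exists>a. r a = psrc s (x, l) \<and> infinite (extending M (l @ [a]))"
proof (rule ccontr)
  assume "\<not> ?thesis"
  then have fin: "finite (\<Union>a\<in>{a. r a = psrc s (x, l)}. extending M (l @ [a]))"
    using finite_edges_with_range by blast
  have "extending M l \<subseteq> insert (x, l) (\<Union>a\<in>{a. r a = psrc s (x, l)}. extending M (l @ [a]))"
  proof
    fix p assume "p \<in> extending M l"
    then obtain ys where p: "p \<in> M" "snd p = l @ ys" unfolding extending_def by blast
    show "p \<in> insert (x, l) (\<Union>a\<in>{a. r a = psrc s (x, l)}. extending M (l @ [a]))"
    proof (cases ys)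
      case Nil
      then show ?thesis using p M by (cases p) auto
    next
      case (Cons a ys')
      then have "is_fpath r s (x, l @ a # ys')" using p M by (metis prod.collapse)
      then have "r a = psrc s (x, l)" by (rule is_fpath_append_Cons)
      moreover have "p \<in> extending M (l @ [a])" using p Cons unfolding extending_def by simp
      ultimately show ?thesis by blast
    qed
  qed
  with fin inf show False by (meson finite_insert finite_subset)
qed

lemma koenig_ipath:
  assumes inf: "infinite M" and M: "\<And>p. p \<in> M \<Longrightarrow> is_fpath r s p \<and> fst p = x"
  obtains \<xi> where "is_ipath r s \<xi>" "r (\<xi> 0) = x" "\<And>n. infinite (extending M (map \<xi> [0..<n]))"
proof -
  define next_edge where
    "next_edge l = (SOME a. r a = psrc s (x, l) \<and> infinite (extending M (l @ [a])))" for l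
  have next_edge: "r (next_edge l) = psrc s (x, l) \<and> infinite (extending M (l @ [next_edge l]))"
    if "infinite (extending M l)" for l
    unfolding next_edge_def by (rule someI_ex) (rule infinite_extending_append_edge[OF M that])
  define L where "L = rec_nat [] (\<lambda>_ l. l @ [next_edge l])"
  have L_0: "L 0 = []" and L_Suc: "L (Suc n) = L n @ [next_edge (L n)]" for n
    by (simp_all add: L_def)
  have inf_L: "infinite (extending M (L n))" for n
    by (induction n) (use inf next_edge in \<open>simp_all add: L_0 L_Suc extending_def\<close>)
  define \<xi> where "\<xi> n = next_edge (L n)" for n
  have L_eq: "L n = map \<xi> [0..<n]" for n
    by (induction n) (simp_all add: L_0 L_Suc \<xi>_def)
  have r_\<xi>: "r (\<xi> n) = psrc s (x, L n)" for n
    using next_edge inf_L \<xi>_def by simp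
  show thesis
  proof
    show "is_ipath r s \<xi>"
      unfolding is_ipath_def
    proof
      fix i
      show "s (\<xi> i) = r (\<xi> (Suc i))"
        using r_\<xi>[of "Suc i"] by (simp add: L_Suc psrc_def \<xi>_def)
    qed
    show "r (\<xi> 0) = x"
      using r_\<xi>[of 0] by (simp add: L_0 psrc_def)
    show "infinite (extending M (map \<xi> [0..<n]))" for n
      using inf_L[of n] unfolding L_eq .
  qed
qed

end

locale cocycle_action = group G for G :: "'g monoid" (structure) +
  fixes r s :: "'e \<Rightarrow> 'v" and av :: "'g \<Rightarrow> 'v \<Rightarrow> 'v" and ae :: "'g \<Rightarrow> 'e \<Rightarrow> 'e"
    and phi :: "'g \<Rightarrow> 'e \<Rightarrow> 'g"
  assumes graph_action: "graph_action G r s av ae" and one_cocycle: "one_cocycle G ae phi"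
begin

lemma phi_closed: "g \<in> carrier G \<Longrightarrow> phi g a \<in> carrier G"
  using one_cocycle unfolding one_cocycle_def by blast

lemma phi_mult: "g \<in> carrier G \<Longrightarrow> h \<in> carrier G \<Longrightarrow> phi (g \<otimes> h) a = phi g (ae h a) \<otimes> phi h a"
  using one_cocycle unfolding one_cocycle_def by blast

lemma ae_one: "ae \<one> = id" and av_one: "av \<one> = id"
  using graph_action unfolding graph_action_def by auto

lemma ae_mult: "g \<in> carrier G \<Longrightarrow> h \<in> carrier G \<Longrightarrow> ae (g \<otimes> h) a = ae g (ae h a)"
  using graph_action unfolding graph_action_def by auto

lemma ae_inj: "g \<in> carrier G \<Longrightarrow> ae g a = ae g b \<Longrightarrow> a = b"
  using graph_action unfolding graph_action_def by (meson bij_def injD)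

lemma r_ae: "g \<in> carrier G \<Longrightarrow> r (ae g a) = av g (r a)"
  using graph_action unfolding graph_action_def by auto

lemma phi_one: "phi \<one> a = \<one>"
proof -
  have "phi \<one> a = phi \<one> a \<otimes> phi \<one> a"
    using phi_mult[of \<one> \<one> a] by (simp add: ae_one)
  then show ?thesis
    using phi_closed[of \<one> a] by (metis l_cancel_one' one_closed r_one)
qed

lemma phi_list_closed: "g \<in> carrier G \<Longrightarrow> phi_list phi g z \<in> carrier G"
  by (induction z arbitrary: g) (auto simp: phi_closed)

lemma phi_list_one [simp]: "phi_list phi \<one> z = \<one>"
  by (induction z) (auto simp: phi_one)

lemma act_list_one [simp]: "act_list ae phi \<one> z = z"
  by (induction z) (auto simp: phi_one ae_one)

lemma act_phi_list_mult:
  assumes "g \<in> carrier G" "h \<in> carrier G"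
  shows "act_list ae phi (g \<otimes> h) z = act_list ae phi g (act_list ae phi h z) \<and>
    phi_list phi (g \<otimes> h) z = phi_list phi g (act_list ae phi h z) \<otimes> phi_list phi h z"
  using assms by (induction z arbitrary: g h) (auto simp: ae_mult phi_mult phi_closed)

lemma act_list_inj: "g \<in> carrier G \<Longrightarrow> act_list ae phi g z = act_list ae phi g z' \<Longrightarrow> z = z'"
proof (induction z arbitrary: g z')
  case Nil
  then show ?case by (cases z') auto
next
  case (Cons a z)
  then obtain b z'' where z': "z' = b # z''" by (cases z') auto
  with Cons.prems have "a = b" by (auto dest: ae_inj)
  with Cons.prems z' show ?case using Cons.IH[of "phi g b" z''] by (auto simp: phi_closed)
qed

definition strongly_fixes :: "'g \<Rightarrow> 'e list \<Rightarrow> bool" where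
  "strongly_fixes k z \<longleftrightarrow> act_list ae phi k z = z \<and> phi_list phi k z = \<one>"

lemma strongly_fixes_Nil [simp]: "strongly_fixes k [] \<longleftrightarrow> k = \<one>"
  by (simp add: strongly_fixes_def)

lemma strongly_fixed_iff: "strongly_fixed G av ae phi k (v, z) \<longleftrightarrow> av k v = v \<and> strongly_fixes k z"
  by (auto simp: strongly_fixed_def strongly_fixes_def act_path_def phi_path_def)

lemma act_phi_list_eq_iff:
  assumes h: "h \<in> carrier G" and h': "h' \<in> carrier G"
  shows "(act_list ae phi h z = act_list ae phi h' z \<and> phi_list phi h z = phi_list phi h' z)
      \<longleftrightarrow> strongly_fixes (inv h' \<otimes> h) z"
proof -
  define k where "k = inv h' \<otimes> h"
  have k: "k \<in> carrier G" using h h' by (simp add: k_def)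
  have "h = h' \<otimes> k" using h h' by (simp add: k_def m_assoc[symmetric])
  then have act: "act_list ae phi h z = act_list ae phi h' (act_list ae phi k z)"
    and phi: "phi_list phi h z = phi_list phi h' (act_list ae phi k z) \<otimes> phi_list phi k z"
    using act_phi_list_mult[OF h' k, of z] by auto
  show ?thesis unfolding k_def[symmetric] strongly_fixes_def
  proof
    assume eq: "act_list ae phi h z = act_list ae phi h' z \<and> phi_list phi h z = phi_list phi h' z"
    then have fixed: "act_list ae phi k z = z" using act act_list_inj[OF h'] by metis
    then have "phi_list phi h' z \<otimes> phi_list phi k z = phi_list phi h' z" using phi eq by simp
    then have "phi_list phi k z = \<one>"
      using phi_list_closed[OF h'] phi_list_closed[OF k] by (metis l_cancel_one')
    with fixed show "act_list ae phi k z = z \<and> phi_list phi k z = \<one>" by simp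
  next
    assume "act_list ae phi k z = z \<and> phi_list phi k z = \<one>"
    then show "act_list ae phi h z = act_list ae phi h' z \<and> phi_list phi h z = phi_list phi h' z"
      using act phi phi_list_closed[OF h'] by simp
  qed
qed

lemma min_strongly_fixed_prefix:
  assumes k: "k \<in> carrier G" "k \<noteq> \<one>" and z: "is_fpath r s (v, z)" "strongly_fixes k z"
  obtains j where "j \<le> length z" "min_strongly_fixed G r s av ae phi k (v, take j z)"
proof -
  obtain a z' where z_Cons: "z = a # z'"
    using k z by (cases z) auto
  have "av k v = v"
    using z z_Cons r_ae[OF k(1), of a] by (simp add: strongly_fixes_def is_fpath_def)
  define j where "j = (LEAST j. strongly_fixes k (take j z))"
  have fixes_j: "strongly_fixes k (take j z)" and "j \<le> length z"
    unfolding j_def using z(2) by (auto intro: LeastI[of _ "length z"] Least_le)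
  have "\<not> strongly_fixes k (take i z)" if "i < j" for i
    using not_less_Least[OF that[unfolded j_def]] .
  then have "min_strongly_fixed G r s av ae phi k (v, take j z)"
    using is_fpath_take[OF z(1)] fixes_j \<open>av k v = v\<close>
    by (auto simp: min_strongly_fixed_def strongly_fixed_iff min_def)
  with \<open>j \<le> length z\<close> show thesis by (rule that)
qed

definition depth :: "('v,'e,'g) selt \<Rightarrow> nat" where
  "depth t = length (snd (snd (snd t)))"

text \<open>For \<xi> \<in> Z(\<beta>) and m \<ge> |\<beta>|, refine (\<alpha>, g, \<beta>) \<xi> m is the product
  (\<alpha>, g, \<beta>)(\<xi>|m, 1, \<xi>|m) = (\<alpha> (g \<epsilon>), \<phi>(g, \<epsilon>), \<xi>|m), where \<xi>|m = \<beta>\<epsilon>.\<close>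

definition refine :: "('v,'e,'g) selt \<Rightarrow> (nat \<Rightarrow> 'e) \<Rightarrow> nat \<Rightarrow> ('v,'e,'g) selt" where
  "refine t \<xi> m = (case t of (\<alpha>, g, \<beta>) \<Rightarrow>
     ((fst \<alpha>, snd \<alpha> @ act_list ae phi g (map \<xi> [length (snd \<beta>)..<m])),
      phi_list phi g (map \<xi> [length (snd \<beta>)..<m]), ipath_prefix r \<xi> m))"

lemma depth_refine [simp]: "depth (refine t \<xi> n) = n"
  by (cases t) (simp add: depth_def refine_def)

lemma snd_snd_refine [simp]: "snd (snd (refine t \<xi> n)) = ipath_prefix r \<xi> n"
  by (cases t) (simp add: refine_def)

lemma refine_closed: "valid_S G r s av t \<Longrightarrow> fst (snd (refine t \<xi> n)) \<in> carrier G"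
  by (cases t) (auto simp: refine_def valid_S_def phi_list_closed)

lemma refine_refine:
  assumes "depth t \<le> n" "n \<le> m"
  shows "refine (refine t \<xi> n) \<xi> m = refine t \<xi> m"
proof -
  obtain \<alpha> g \<beta> where t: "t = (\<alpha>, g, \<beta>)" by (cases t)
  have "[length (snd \<beta>)..<m] = [length (snd \<beta>)..<n] @ [n..<m]"
    using assms upt_add_eq_append[of "length (snd \<beta>)" n "m - n"] by (simp add: t depth_def)
  then show ?thesis by (simp add: t refine_def act_list_append phi_list_append)
qed

lemma refine_cong:
  assumes "ipath_prefix r \<xi>' n = ipath_prefix r \<xi> n"
  shows "refine t \<xi>' n = refine t \<xi> n"
proof -
  have "map \<xi>' [a..<n] = map \<xi> [a..<n]" for a
    using assms by (auto simp: ipath_prefix_eq_iff)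
  then show ?thesis
    unfolding refine_def by (simp only: assms)
qed

lemma refine_past_level:
  assumes "refine t \<xi> N = (\<alpha>, h, \<gamma>)" "depth t \<le> N" "N \<le> m"
    and "ipath_prefix r \<xi>' N = ipath_prefix r \<xi> N"
  shows "refine t \<xi>' m = ((fst \<alpha>, snd \<alpha> @ act_list ae phi h (map \<xi>' [N..<m])),
    phi_list phi h (map \<xi>' [N..<m]), ipath_prefix r \<xi>' m)"
proof -
  have "refine t \<xi>' m = refine (refine t \<xi>' N) \<xi>' m" using refine_refine assms by simp
  also have "\<dots> = refine (\<alpha>, h, ipath_prefix r \<xi> N) \<xi>' m"
    using refine_cong[OF assms(4)] snd_snd_refine[of t \<xi> N] assms(1) by simp
  finally show ?thesis by (simp add: refine_def)
qed

lemma sprod_idempotent_ge: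
  assumes t: "valid_S G r s av (\<alpha>, g, \<beta>)" and \<xi>: "\<xi> \<in> cyl r s \<beta>" and le: "length (snd \<beta>) \<le> m"
  shows "sprod G r s av ae phi (\<alpha>, g, \<beta>) (ipath_prefix r \<xi> m, \<one>, ipath_prefix r \<xi> m)
    = Some (refine (\<alpha>, g, \<beta>) \<xi> m)"
proof -
  define b where "b = length (snd \<beta>)"
  have ip: "is_ipath r s \<xi>" using cyl_is_ipath[OF \<xi>] .
  have \<beta>: "\<beta> = ipath_prefix r \<xi> b" unfolding b_def by (rule cyl_eq_ipath_prefix[OF \<xi>])
  have g: "g \<in> carrier G" using t by (simp add: valid_S_def)
  show ?thesis
  proof (cases "m = b")
    case True
    then have \<beta>_m: "ipath_prefix r \<xi> m = \<beta>" using \<beta> by simp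
    have ext: "is_ext r s \<beta> (ipath_prefix r \<xi> m) (psrc s \<beta>, [])"
      unfolding \<beta>_m is_ext_def pconcat_def by (simp add: is_fpath_def)
    have "sprod G r s av ae phi (\<alpha>, g, \<beta>) (ipath_prefix r \<xi> m, \<one>, ipath_prefix r \<xi> m) = Some (\<alpha>, g, \<beta>)"
      unfolding sprod_def using ext some_ext[OF ext] g
      by (auto simp: Let_def phi_path_def act_path_def pconcat_def \<beta>_m)
    moreover have "refine (\<alpha>, g, \<beta>) \<xi> m = (\<alpha>, g, \<beta>)"
      unfolding refine_def using True \<beta>_m b_def by simp
    ultimately show ?thesis by simp
  next
    case False
    then have lt: "b < m" using le b_def by simp
    have no_ext: "\<not> (\<exists>\<epsilon>. is_ext r s \<beta> (ipath_prefix r \<xi> m) \<epsilon>)"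
      using lt by (auto simp: is_ext_def pconcat_def b_def)
    define \<epsilon> where "\<epsilon> = (psrc s \<beta>, map \<xi> [b..<m])"
    have "[0..<m] = [0..<b] @ [b..<m]" using lt upt_add_eq_append[of 0 b "m - b"] by simp
    then have "pconcat \<beta> \<epsilon> = ipath_prefix r \<xi> m"
      using \<beta> unfolding \<epsilon>_def pconcat_def ipath_prefix_def by simp
    moreover have "psrc s \<beta> = r (\<xi> b)" using \<beta> psrc_ipath_prefix[OF ip] by metis
    ultimately have ext: "is_ext r s (ipath_prefix r \<xi> m) \<beta> \<epsilon>"
      unfolding is_ext_def using is_fpath_segment[OF ip, of b m] by (simp add: \<epsilon>_def)
    have "sprod G r s av ae phi (\<alpha>, g, \<beta>) (ipath_prefix r \<xi> m, \<one>, ipath_prefix r \<xi> m) =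
        Some (pconcat \<alpha> (act_path av ae phi g \<epsilon>), phi_path phi g \<epsilon> \<otimes> \<one>, ipath_prefix r \<xi> m)"
      unfolding sprod_def prod.case
      using no_ext exI[where P = "is_ext r s (ipath_prefix r \<xi> m) \<beta>", OF ext]
      by (simp only: if_False if_True Let_def some_ext[OF ext] simp_thms)
    also have "\<dots> = Some (refine (\<alpha>, g, \<beta>) \<xi> m)"
      unfolding refine_def pconcat_def act_path_def phi_path_def \<epsilon>_def b_def
      using phi_list_closed[OF g] by simp
    finally show ?thesis .
  qed
qed

lemma sprod_idempotent_lt:
  assumes t: "valid_S G r s av (\<alpha>, g, \<beta>)" and \<xi>: "\<xi> \<in> cyl r s \<beta>" and lt: "m < length (snd \<beta>)"
  shows "sprod G r s av ae phi (\<alpha>, g, \<beta>) (ipath_prefix r \<xi> m, \<one>, ipath_prefix r \<xi> m)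
    = Some (\<alpha>, g, \<beta>)"
proof -
  define b where "b = length (snd \<beta>)"
  have ip: "is_ipath r s \<xi>" using cyl_is_ipath[OF \<xi>] .
  have \<beta>: "\<beta> = ipath_prefix r \<xi> b" unfolding b_def by (rule cyl_eq_ipath_prefix[OF \<xi>])
  have g: "g \<in> carrier G" using t by (simp add: valid_S_def)
  define \<epsilon> where "\<epsilon> = (r (\<xi> m), map \<xi> [m..<b])"
  have "[0..<b] = [0..<m] @ [m..<b]" using lt b_def upt_add_eq_append[of 0 m "b - m"] by simp
  then have \<beta>_eq: "pconcat (ipath_prefix r \<xi> m) \<epsilon> = \<beta>"
    using \<beta> unfolding \<epsilon>_def pconcat_def ipath_prefix_def by simp
  then have ext: "is_ext r s \<beta> (ipath_prefix r \<xi> m) \<epsilon>"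
    unfolding is_ext_def using is_fpath_segment[OF ip, of m b] psrc_ipath_prefix[OF ip, of m]
    by (simp add: \<epsilon>_def)
  have "sprod G r s av ae phi (\<alpha>, g, \<beta>) (ipath_prefix r \<xi> m, \<one>, ipath_prefix r \<xi> m) =
      Some (\<alpha>, g \<otimes> phi_path phi \<one> \<epsilon>, pconcat (ipath_prefix r \<xi> m) (act_path av ae phi (inv \<one>) \<epsilon>))"
    unfolding sprod_def prod.case
    using exI[where P = "is_ext r s \<beta> (ipath_prefix r \<xi> m)", OF ext]
    by (simp only: if_True Let_def some_ext[OF ext] simp_thms)
  also have "\<dots> = Some (\<alpha>, g, \<beta>)"
    using \<beta>_eq g unfolding phi_path_def act_path_def pconcat_def by simp
  finally show ?thesis .
qed

abbreviation "Reps \<equiv> germ_reps G r s av"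
abbreviation "Germ \<equiv> germ G r s av ae phi"

lemma Reps_iff: "(t, \<xi>) \<in> Reps \<longleftrightarrow> valid_S G r s av t \<and> \<xi> \<in> cyl r s (snd (snd t))"
  by (simp add: germ_reps_def)

lemma Reps_is_ipath: "(t, \<xi>) \<in> Reps \<Longrightarrow> is_ipath r s \<xi>"
  unfolding Reps_iff using cyl_is_ipath by blast

lemma Reps_cyl_ipath_prefix:
  "(t, \<xi>) \<in> Reps \<Longrightarrow> depth t \<le> n \<Longrightarrow> \<xi>' \<in> cyl r s (ipath_prefix r \<xi> n) \<Longrightarrow> (t, \<xi>') \<in> Reps"
  using cyl_ipath_prefix_subset by (fastforce simp: Reps_iff depth_def)

lemma sprod_idempotent:
  assumes "(t, \<xi>) \<in> Reps"
  shows "sprod G r s av ae phi t (ipath_prefix r \<xi> m, \<one>, ipath_prefix r \<xi> m)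
    = Some (if m < depth t then t else refine t \<xi> m)"
  using assms sprod_idempotent_ge sprod_idempotent_lt
  by (cases t) (auto simp: Reps_iff depth_def)

definition same_germ :: "('v,'e,'g) selt \<Rightarrow> ('v,'e,'g) selt \<Rightarrow> (nat \<Rightarrow> 'e) \<Rightarrow> bool" where
  "same_germ t u \<xi> \<longleftrightarrow> (\<forall>\<^sub>F m in sequentially. refine t \<xi> m = refine u \<xi> m)"

lemma same_germ_refl [simp]: "same_germ t t \<xi>"
  by (simp add: same_germ_def)

lemma same_germ_sym: "same_germ t u \<xi> \<Longrightarrow> same_germ u t \<xi>"
  unfolding same_germ_def by (auto elim: eventually_mono)

lemma same_germ_trans: "same_germ t u \<xi> \<Longrightarrow> same_germ u w \<xi> \<Longrightarrow> same_germ t w \<xi>"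
  unfolding same_germ_def by (auto elim: eventually_elim2)

lemma same_germ_if_refine_eq:
  assumes "refine t \<xi> n = refine u \<xi> n" "depth t \<le> n" "depth u \<le> n"
    and "ipath_prefix r \<xi>' n = ipath_prefix r \<xi> n"
  shows "same_germ t u \<xi>'"
proof -
  have "refine t \<xi>' m = refine u \<xi>' m" if "n \<le> m" for m
  proof -
    have "refine t \<xi>' m = refine (refine t \<xi>' n) \<xi>' m" using refine_refine assms that by simp
    also have "\<dots> = refine (refine u \<xi>' n) \<xi>' m" using refine_cong[OF assms(4)] assms(1) by simp
    also have "\<dots> = refine u \<xi>' m" using refine_refine assms that by simp
    finally show ?thesis .
  qed
  then show ?thesis unfolding same_germ_def eventually_sequentially by blast
qed

lemma same_germ_refine_eq_beyond: "same_germ t u \<xi> \<Longrightarrow> \<exists>m\<ge>n. refine t \<xi> m = refine u \<xi> m"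
  unfolding same_germ_def eventually_sequentially by (metis max.cobounded1 max.cobounded2)

lemma germ_rel_iff:
  assumes t: "(t, \<xi>) \<in> Reps" and u: "(u, \<mu>) \<in> Reps"
  shows "((t, \<xi>), (u, \<mu>)) \<in> germ_rel G r s av ae phi \<longleftrightarrow> \<xi> = \<mu> \<and> same_germ t u \<xi>"
proof
  assume "((t, \<xi>), (u, \<mu>)) \<in> germ_rel G r s av ae phi"
  then obtain \<gamma> where \<xi>\<mu>: "\<xi> = \<mu>" and \<gamma>: "\<xi> \<in> cyl r s \<gamma>"
    and eq: "sprod G r s av ae phi t (\<gamma>, \<one>, \<gamma>) = sprod G r s av ae phi u (\<gamma>, \<one>, \<gamma>)"
    unfolding germ_rel_def by auto
  define n where "n = length (snd \<gamma>)"
  have "\<gamma> = ipath_prefix r \<xi> n" unfolding n_def by (rule cyl_eq_ipath_prefix[OF \<gamma>])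
  with eq sprod_idempotent[OF t, of n] sprod_idempotent[of u \<xi> n] u \<xi>\<mu>
  have "(if n < depth t then t else refine t \<xi> n) = (if n < depth u then u else refine u \<xi> n)"
    by simp
  then consider "t = u" | "refine t \<xi> n = refine u \<xi> n" "depth t \<le> n" "depth u \<le> n"
    by (fastforce split: if_splits)
  then have "same_germ t u \<xi>"
    by cases (auto intro: same_germ_if_refine_eq)
  with \<xi>\<mu> show "\<xi> = \<mu> \<and> same_germ t u \<xi>" by simp
next
  assume "\<xi> = \<mu> \<and> same_germ t u \<xi>"
  then have \<xi>\<mu>: "\<xi> = \<mu>" and "same_germ t u \<xi>" by auto
  then obtain n where n: "\<forall>m\<ge>n. refine t \<xi> m = refine u \<xi> m"
    unfolding same_germ_def eventually_sequentially by blast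
  define m where "m = max n (max (depth t) (depth u))"
  have ip: "is_ipath r s \<xi>" using Reps_is_ipath[OF t] .
  have "sprod G r s av ae phi t (ipath_prefix r \<xi> m, \<one>, ipath_prefix r \<xi> m)
      = sprod G r s av ae phi u (ipath_prefix r \<xi> m, \<one>, ipath_prefix r \<xi> m)"
    using sprod_idempotent[OF t, of m] sprod_idempotent[of u \<xi> m] u \<xi>\<mu> n m_def by simp
  with t u \<xi>\<mu> is_fpath_ipath_prefix[OF ip] ipath_in_cyl_ipath_prefix[OF ip]
  show "((t, \<xi>), (u, \<mu>)) \<in> germ_rel G r s av ae phi"
    unfolding germ_rel_def by blast
qed

lemma germ_eq_iff:
  assumes t: "(t, \<xi>) \<in> Reps" and u: "(u, \<mu>) \<in> Reps"
  shows "Germ t \<xi> = Germ u \<mu> \<longleftrightarrow> \<xi> = \<mu> \<and> same_germ t u \<xi>"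
proof
  assume "Germ t \<xi> = Germ u \<mu>"
  moreover have "(t, \<xi>) \<in> Germ t \<xi>"
    using germ_rel_iff[OF t t] by (simp add: germ_def)
  ultimately have "((u, \<mu>), (t, \<xi>)) \<in> germ_rel G r s av ae phi"
    by (simp add: germ_def)
  then have "\<mu> = \<xi>" "same_germ u t \<mu>"
    using germ_rel_iff[OF u t] by auto
  then show "\<xi> = \<mu> \<and> same_germ t u \<xi>"
    using same_germ_sym by blast
next
  assume "\<xi> = \<mu> \<and> same_germ t u \<xi>"
  then have \<xi>\<mu>: "\<xi> = \<mu>" and tu: "same_germ t u \<xi>" by auto
  have "((t, \<xi>), p) \<in> germ_rel G r s av ae phi \<longleftrightarrow> ((u, \<mu>), p) \<in> germ_rel G r s av ae phi" for p
  proof (cases "p \<in> Reps")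
    case True
    obtain w \<zeta> where p: "p = (w, \<zeta>)" by (cases p)
    show ?thesis
      using germ_rel_iff[OF t True[unfolded p]] germ_rel_iff[OF u True[unfolded p]] \<xi>\<mu> tu
        same_germ_sym same_germ_trans unfolding p by blast
  next
    case False
    then show ?thesis unfolding germ_rel_def by auto
  qed
  then show "Germ t \<xi> = Germ u \<mu>" by (auto simp: germ_def)
qed

abbreviation "Tight \<equiv> tight_groupoid_topology G r s av ae phi"

definition basic_open :: "('v,'e,'g) selt \<Rightarrow> ('v,'e) fpath \<Rightarrow> (('v,'e,'g) selt \<times> (nat \<Rightarrow> 'e)) set set"
  where "basic_open t \<gamma> = {Germ t \<xi> | \<xi>. \<xi> \<in> cyl r s (snd (snd t)) \<and> \<xi> \<in> cyl r s \<gamma>}"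

lemma tight_basic_opens_eq:
  "tight_basic_opens G r s av ae phi = {basic_open t \<gamma> | t \<gamma>. valid_S G r s av t \<and> is_fpath r s \<gamma>}"
  unfolding tight_basic_opens_def basic_open_def by simp

lemma openin_basic_open: "valid_S G r s av t \<Longrightarrow> is_fpath r s \<gamma> \<Longrightarrow> openin Tight (basic_open t \<gamma>)"
  unfolding tight_groupoid_topology_def
  by (rule topology_generated_by_Basis) (unfold tight_basic_opens_eq, blast)

lemma germ_in_basic_open: "(t, \<xi>) \<in> Reps \<Longrightarrow> \<xi> \<in> cyl r s \<gamma> \<Longrightarrow> Germ t \<xi> \<in> basic_open t \<gamma>"
  unfolding basic_open_def Reps_iff by blast

lemma topspace_TightE:
  assumes "P \<in> topspace Tight"
  obtains t \<xi> where "(t, \<xi>) \<in> Reps" "P = Germ t \<xi>"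
  using assms unfolding tight_groupoid_topology_def topology_generated_by_topspace
    tight_basic_opens_eq basic_open_def Reps_iff by blast

lemma germ_in_topspace:
  assumes "(t, \<xi>) \<in> Reps"
  shows "Germ t \<xi> \<in> topspace Tight"
proof -
  have "valid_S G r s av t" "is_ipath r s \<xi>" using assms Reps_is_ipath by (simp_all add: Reps_iff)
  then have "openin Tight (basic_open t (ipath_prefix r \<xi> 0))"
    by (simp add: openin_basic_open is_fpath_ipath_prefix)
  moreover have "Germ t \<xi> \<in> basic_open t (ipath_prefix r \<xi> 0)"
    using germ_in_basic_open[OF assms ipath_in_cyl_ipath_prefix] \<open>is_ipath r s \<xi>\<close> .
  ultimately show ?thesis using openin_subset by blast
qed

lemma basic_open_contains_cylinder_germs:
  assumes t: "(t, \<xi>) \<in> Reps" and t': "valid_S G r s av t'" and "Germ t \<xi> \<in> basic_open t' \<gamma>'"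
  shows "\<exists>n. \<forall>\<xi>' \<in> cyl r s (ipath_prefix r \<xi> n). Germ t \<xi>' \<in> basic_open t' \<gamma>'"
proof -
  obtain \<xi>1 where \<xi>1: "\<xi>1 \<in> cyl r s (snd (snd t'))" "\<xi>1 \<in> cyl r s \<gamma>'" and eq: "Germ t \<xi> = Germ t' \<xi>1"
    using assms(3) unfolding basic_open_def by blast
  have "(t', \<xi>1) \<in> Reps" using t' \<xi>1 Reps_iff by blast
  from germ_eq_iff[OF t this] eq have "\<xi>1 = \<xi>" "same_germ t t' \<xi>" by auto
  then obtain n0 where n0: "\<forall>m\<ge>n0. refine t \<xi> m = refine t' \<xi> m"
    unfolding same_germ_def eventually_sequentially by blast
  define n where "n = max n0 (max (depth t) (max (depth t') (length (snd \<gamma>'))))"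
  have "Germ t \<xi>' \<in> basic_open t' \<gamma>'" if \<xi>': "\<xi>' \<in> cyl r s (ipath_prefix r \<xi> n)" for \<xi>'
  proof -
    have "depth t' \<le> n" "length (snd \<gamma>') \<le> n" by (simp_all add: n_def)
    then have in_t': "\<xi>' \<in> cyl r s (snd (snd t'))" and in_\<gamma>': "\<xi>' \<in> cyl r s \<gamma>'"
      using cyl_ipath_prefix_subset[OF \<xi>1(1)] cyl_ipath_prefix_subset[OF \<xi>1(2)] \<xi>'
      unfolding \<open>\<xi>1 = \<xi>\<close> depth_def by blast+
    have "(t, \<xi>') \<in> Reps"
      using Reps_cyl_ipath_prefix[OF t _ \<xi>'] by (simp add: n_def)
    moreover have "(t', \<xi>') \<in> Reps" using t' in_t' by (simp add: Reps_iff)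
    moreover have "same_germ t t' \<xi>'"
      using same_germ_if_refine_eq[of t \<xi> n t' \<xi>'] n0 \<xi>' by (simp add: n_def cyl_ipath_prefix)
    ultimately have "Germ t \<xi>' = Germ t' \<xi>'" by (simp add: germ_eq_iff)
    then show ?thesis
      unfolding basic_open_def using in_t' in_\<gamma>' by blast
  qed
  then show ?thesis by blast
qed

lemma open_contains_cylinder_germs:
  assumes "openin Tight U" "(t, \<xi>) \<in> Reps" "Germ t \<xi> \<in> U"
  obtains n where "\<And>\<xi>'. \<xi>' \<in> cyl r s (ipath_prefix r \<xi> n) \<Longrightarrow> Germ t \<xi>' \<in> U"
proof -
  have "generate_topology_on (tight_basic_opens G r s av ae phi) U"
    using assms(1) by (simp add: tight_groupoid_topology_def openin_topology_generated_by_iff)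
  then have "\<exists>n. \<forall>\<xi>' \<in> cyl r s (ipath_prefix r \<xi> n). Germ t \<xi>' \<in> U"
    using assms(2,3)
  proof (induction arbitrary: t \<xi>)
    case Empty
    then show ?case by simp
  next
    case (Int a b)
    then obtain n1 n2 where n1: "\<forall>\<xi>' \<in> cyl r s (ipath_prefix r \<xi> n1). Germ t \<xi>' \<in> a"
      and n2: "\<forall>\<xi>' \<in> cyl r s (ipath_prefix r \<xi> n2). Germ t \<xi>' \<in> b" by blast
    have "\<forall>\<xi>' \<in> cyl r s (ipath_prefix r \<xi> (max n1 n2)). Germ t \<xi>' \<in> a \<inter> b"
      using n1 n2 cyl_ipath_prefix_mono[of n1 "max n1 n2" r s \<xi>]
        cyl_ipath_prefix_mono[of n2 "max n1 n2" r s \<xi>] by auto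
    then show ?case by blast
  next
    case (UN K)
    then show ?case by blast
  next
    case (Basis S)
    then obtain t' \<gamma>' where S: "S = basic_open t' \<gamma>'" and t': "valid_S G r s av t'"
      unfolding tight_basic_opens_eq by blast
    show ?case
      using basic_open_contains_cylinder_germs[OF Basis(2) t'] Basis(3) unfolding S .
  qed
  then show thesis using that by blast
qed

lemma disjnt_basic_opens:
  assumes "valid_S G r s av t" "valid_S G r s av u"
    and "\<And>\<xi>'. \<xi>' \<in> cyl r s \<gamma> \<Longrightarrow> \<xi>' \<in> cyl r s \<delta> \<Longrightarrow> \<not> same_germ t u \<xi>'"
  shows "disjnt (basic_open t \<gamma>) (basic_open u \<delta>)"
proof -
  have False if "Germ t \<xi> = Germ u \<mu>" "\<xi> \<in> cyl r s (snd (snd t))" "\<xi> \<in> cyl r s \<gamma>"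
    "\<mu> \<in> cyl r s (snd (snd u))" "\<mu> \<in> cyl r s \<delta>" for \<xi> \<mu>
  proof -
    have "(t, \<xi>) \<in> Reps" "(u, \<mu>) \<in> Reps" using assms(1,2) that by (simp_all add: Reps_iff)
    from germ_eq_iff[OF this] that(1) have "\<xi> = \<mu>" "same_germ t u \<xi>" by auto
    with that(3,5) assms(3) show False by blast
  qed
  then show ?thesis
    unfolding disjnt_def basic_open_def by blast
qed

lemma germs_separatedI:
  assumes t: "(t, \<xi>) \<in> Reps" and u: "(u, \<mu>) \<in> Reps"
    and "\<And>\<xi>'. \<xi>' \<in> cyl r s (ipath_prefix r \<xi> n) \<Longrightarrow> \<xi>' \<in> cyl r s (ipath_prefix r \<mu> n)
      \<Longrightarrow> \<not> same_germ t u \<xi>'"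
  shows "\<exists>U V. openin Tight U \<and> openin Tight V \<and> Germ t \<xi> \<in> U \<and> Germ u \<mu> \<in> V \<and> disjnt U V"
proof (intro exI conjI)
  have t': "valid_S G r s av t" and u': "valid_S G r s av u" using t u by (simp_all add: Reps_iff)
  have \<xi>: "is_ipath r s \<xi>" and \<mu>: "is_ipath r s \<mu>" using t u by (simp_all add: Reps_is_ipath)
  show "openin Tight (basic_open t (ipath_prefix r \<xi> n))"
    by (rule openin_basic_open[OF t' is_fpath_ipath_prefix[OF \<xi>]])
  show "openin Tight (basic_open u (ipath_prefix r \<mu> n))"
    by (rule openin_basic_open[OF u' is_fpath_ipath_prefix[OF \<mu>]])
  show "disjnt (basic_open t (ipath_prefix r \<xi> n)) (basic_open u (ipath_prefix r \<mu> n))"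
    by (rule disjnt_basic_opens[OF t' u' assms(3)])
  show "Germ t \<xi> \<in> basic_open t (ipath_prefix r \<xi> n)"
    by (rule germ_in_basic_open[OF t ipath_in_cyl_ipath_prefix[OF \<xi>]])
  show "Germ u \<mu> \<in> basic_open u (ipath_prefix r \<mu> n)"
    by (rule germ_in_basic_open[OF u ipath_in_cyl_ipath_prefix[OF \<mu>]])
qed

lemma germs_not_separated:
  assumes t: "(t, \<xi>) \<in> Reps" and u: "(u, \<xi>) \<in> Reps" and ne: "Germ t \<xi> \<noteq> Germ u \<xi>"
    and near: "\<And>n. \<exists>\<xi>' \<in> cyl r s (ipath_prefix r \<xi> n). (t, \<xi>') \<in> Reps \<and> (u, \<xi>') \<in> Reps \<and> same_germ t u \<xi>'"
  shows "\<not> Hausdorff_space Tight"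
proof
  assume "Hausdorff_space Tight"
  moreover have "Germ t \<xi> \<in> topspace Tight" "Germ u \<xi> \<in> topspace Tight"
    using t u by (simp_all add: germ_in_topspace)
  ultimately have "\<exists>U V. openin Tight U \<and> openin Tight V \<and> Germ t \<xi> \<in> U \<and> Germ u \<xi> \<in> V
      \<and> disjnt U V"
    using ne unfolding Hausdorff_space_def by blast
  then obtain U V where UV: "openin Tight U" "openin Tight V" "Germ t \<xi> \<in> U" "Germ u \<xi> \<in> V"
    "disjnt U V"
    by blast
  obtain n1 where n1: "\<And>\<xi>'. \<xi>' \<in> cyl r s (ipath_prefix r \<xi> n1) \<Longrightarrow> Germ t \<xi>' \<in> U"
    using open_contains_cylinder_germs[OF UV(1) t UV(3)] by blast
  obtain n2 where n2: "\<And>\<xi>'. \<xi>' \<in> cyl r s (ipath_prefix r \<xi> n2) \<Longrightarrow> Germ u \<xi>' \<in> V"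
    using open_contains_cylinder_germs[OF UV(2) u UV(4)] by blast
  obtain \<xi>' where \<xi>': "\<xi>' \<in> cyl r s (ipath_prefix r \<xi> (max n1 n2))" "(t, \<xi>') \<in> Reps" "(u, \<xi>') \<in> Reps"
    "same_germ t u \<xi>'"
    using near by blast
  then have "Germ t \<xi>' = Germ u \<xi>'" using germ_eq_iff by blast
  moreover have "Germ t \<xi>' \<in> U"
    using n1 \<xi>'(1) cyl_ipath_prefix_mono[of n1 "max n1 n2" r s \<xi>] by auto
  moreover have "Germ u \<xi>' \<in> V"
    using n2 \<xi>'(1) cyl_ipath_prefix_mono[of n2 "max n1 n2" r s \<xi>] by auto
  ultimately show False using UV(5) by (auto simp: disjnt_def)
qed

lemma refine_eq_iff_strongly_fixes:
  assumes t: "refine t \<xi> N = (\<alpha>, h, \<gamma>)" and u: "refine u \<xi> N = (\<alpha>, h', \<delta>)"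
    and h: "h \<in> carrier G" "h' \<in> carrier G" and depth: "depth t \<le> N" "depth u \<le> N"
    and "N \<le> m" and \<xi>': "ipath_prefix r \<xi>' N = ipath_prefix r \<xi> N"
  shows "refine t \<xi>' m = refine u \<xi>' m \<longleftrightarrow> strongly_fixes (inv h' \<otimes> h) (map \<xi>' [N..<m])"
  using refine_past_level[OF t depth(1) \<open>N \<le> m\<close> \<xi>'] refine_past_level[OF u depth(2) \<open>N \<le> m\<close> \<xi>']
    act_phi_list_eq_iff[OF h]
  by simp

lemma refine_neq_if_range_neq:
  assumes t: "refine t \<xi> N = (\<alpha>, h, \<gamma>)" and u: "refine u \<xi> N = (\<alpha>', h', \<delta>)" and "\<alpha> \<noteq> \<alpha>'"
    and depth: "depth t \<le> N" "depth u \<le> N"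
    and "N \<le> m" and \<xi>': "ipath_prefix r \<xi>' N = ipath_prefix r \<xi> N"
  shows "refine t \<xi>' m \<noteq> refine u \<xi>' m"
  using refine_past_level[OF t depth(1) \<open>N \<le> m\<close> \<xi>'] refine_past_level[OF u depth(2) \<open>N \<le> m\<close> \<xi>'] \<open>\<alpha> \<noteq> \<alpha>'\<close>
  by (auto simp: prod_eq_iff append_eq_append_conv)

text \<open>A minimal strongly fixed prefix of a fixed segment of \<xi>' is shorter than the bound L,
  so it already lies on \<xi> once \<xi>' follows \<xi> for N + L + 1 steps.\<close>

lemma not_strongly_fixes_on_cylinder:
  assumes k: "k \<in> carrier G"
    and fin: "finite {p. min_strongly_fixed G r s av ae phi k p \<and> fst p = r (\<xi> N)}"
    and unfixed: "\<And>m. N \<le> m \<Longrightarrow> \<not> strongly_fixes k (map \<xi> [N..<m])"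
  obtains n where "\<And>\<xi>' m. \<xi>' \<in> cyl r s (ipath_prefix r \<xi> n) \<Longrightarrow> N \<le> m
    \<Longrightarrow> \<not> strongly_fixes k (map \<xi>' [N..<m])"
proof -
  have "k \<noteq> \<one>" using unfixed[of N] by simp
  have "finite ((\<lambda>p. length (snd p)) ` {p. min_strongly_fixed G r s av ae phi k p \<and> fst p = r (\<xi> N)})"
    using fin by simp
  then obtain L where L: "\<And>p. min_strongly_fixed G r s av ae phi k p \<Longrightarrow> fst p = r (\<xi> N)
      \<Longrightarrow> length (snd p) < L"
    unfolding finite_nat_set_iff_bounded by blast
  show thesis
  proof (rule that)
    fix \<xi>' m assume "\<xi>' \<in> cyl r s (ipath_prefix r \<xi> (Suc (N + L)))" and "N \<le> m"
    then have \<xi>': "is_ipath r s \<xi>'" "ipath_prefix r \<xi>' (Suc (N + L)) = ipath_prefix r \<xi> (Suc (N + L))"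
      by (simp_all add: cyl_ipath_prefix)
    then have agree: "\<xi>' i = \<xi> i" if "i \<le> N + L" for i
      using that by (simp add: ipath_prefix_eq_iff)
    show "\<not> strongly_fixes k (map \<xi>' [N..<m])"
    proof
      assume "strongly_fixes k (map \<xi>' [N..<m])"
      then obtain j where j: "j \<le> length (map \<xi>' [N..<m])"
        and min: "min_strongly_fixed G r s av ae phi k (r (\<xi>' N), take j (map \<xi>' [N..<m]))"
        using min_strongly_fixed_prefix[OF k \<open>k \<noteq> \<one>\<close> is_fpath_segment[OF \<xi>'(1)]] by blast
      have "j < L" using L[OF min] agree[of N] j by simp
      have "take j (map \<xi>' [N..<m]) = map \<xi>' [N..<N + j]"
        using j \<open>N \<le> m\<close> by (simp add: take_map)
      also have "\<dots> = map \<xi> [N..<N + j]"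
        using \<open>j < L\<close> by (intro map_cong refl agree) simp
      finally have "take j (map \<xi>' [N..<m]) = map \<xi> [N..<N + j]" .
      with min have "strongly_fixes k (map \<xi> [N..<N + j])"
        by (simp add: min_strongly_fixed_def strongly_fixed_iff)
      with unfixed show False by simp
    qed
  qed
qed

lemma not_same_germ_on_cylinder:
  assumes fin: "\<forall>g\<in>carrier G. \<forall>x. finite {p. min_strongly_fixed G r s av ae phi g p \<and> fst p = x}"
    and t: "(t, \<xi>) \<in> Reps" and u: "(u, \<xi>) \<in> Reps" and ne: "\<not> same_germ t u \<xi>"
  obtains n where "\<And>\<xi>'. \<xi>' \<in> cyl r s (ipath_prefix r \<xi> n) \<Longrightarrow> \<not> same_germ t u \<xi>'"
proof -
  define N where "N = max (depth t) (depth u)"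
  obtain \<alpha> h \<gamma> \<alpha>' h' \<delta> where ref_t: "refine t \<xi> N = (\<alpha>, h, \<gamma>)"
    and ref_u: "refine u \<xi> N = (\<alpha>', h', \<delta>)"
    by (metis prod_cases3)
  have h: "h \<in> carrier G" "h' \<in> carrier G"
    using refine_closed[of t \<xi> N] refine_closed[of u \<xi> N] ref_t ref_u t u by (auto simp: Reps_iff)
  have depth: "depth t \<le> N" "depth u \<le> N" by (simp_all add: N_def)
  show thesis
  proof (cases "\<alpha> = \<alpha>'")
    case False
    show thesis
    proof (rule that)
      fix \<xi>' assume "\<xi>' \<in> cyl r s (ipath_prefix r \<xi> N)"
      then have "ipath_prefix r \<xi>' N = ipath_prefix r \<xi> N" by (simp add: cyl_ipath_prefix)
      then show "\<not> same_germ t u \<xi>'"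
        using same_germ_refine_eq_beyond refine_neq_if_range_neq[OF ref_t ref_u False depth] by blast
    qed
  next
    case True
    define k where "k = inv h' \<otimes> h"
    have k: "k \<in> carrier G" using h by (simp add: k_def)
    have agree_iff: "refine t \<xi>' m = refine u \<xi>' m \<longleftrightarrow> strongly_fixes k (map \<xi>' [N..<m])"
      if "ipath_prefix r \<xi>' N = ipath_prefix r \<xi> N" "N \<le> m" for \<xi>' m
      using refine_eq_iff_strongly_fixes[OF ref_t ref_u[folded True] h depth that(2,1)]
      by (simp add: k_def)
    have unfixed: "\<not> strongly_fixes k (map \<xi> [N..<m])" if "N \<le> m" for m
    proof
      assume "strongly_fixes k (map \<xi> [N..<m])"
      then have "refine t \<xi> m = refine u \<xi> m" using agree_iff that by simp
      then have "same_germ t u \<xi>" using same_germ_if_refine_eq that depth by simp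
      with ne show False ..
    qed
    obtain n where n: "\<And>\<xi>' m. \<xi>' \<in> cyl r s (ipath_prefix r \<xi> n) \<Longrightarrow> N \<le> m
        \<Longrightarrow> \<not> strongly_fixes k (map \<xi>' [N..<m])"
      using not_strongly_fixes_on_cylinder[OF k _ unfixed] fin k by blast
    show thesis
    proof (rule that)
      fix \<xi>' assume \<xi>': "\<xi>' \<in> cyl r s (ipath_prefix r \<xi> (max n N))"
      then have in_n: "\<xi>' \<in> cyl r s (ipath_prefix r \<xi> n)"
        using cyl_ipath_prefix_mono[of n "max n N" r s \<xi>] by auto
      have pre: "ipath_prefix r \<xi>' N = ipath_prefix r \<xi> N"
        using \<xi>' by (auto simp: cyl_ipath_prefix intro: ipath_prefix_eq_mono)
      show "\<not> same_germ t u \<xi>'"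
      proof
        assume "same_germ t u \<xi>'"
        then obtain m where "N \<le> m" "refine t \<xi>' m = refine u \<xi>' m"
          using same_germ_refine_eq_beyond by blast
        with agree_iff[OF pre] n[OF in_n] show False by blast
      qed
    qed
  qed
qed

lemma Hausdorff_if_finite_min_strongly_fixed:
  assumes fin: "\<forall>g\<in>carrier G. \<forall>x. finite {p. min_strongly_fixed G r s av ae phi g p \<and> fst p = x}"
  shows "Hausdorff_space Tight"
  unfolding Hausdorff_space_def
proof (intro allI impI)
  fix P Q assume PQ: "P \<in> topspace Tight \<and> Q \<in> topspace Tight \<and> P \<noteq> Q"
  then obtain t \<xi> u \<mu> where t: "(t, \<xi>) \<in> Reps" "P = Germ t \<xi>" and u: "(u, \<mu>) \<in> Reps" "Q = Germ u \<mu>"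
    by (metis topspace_TightE)
  obtain n where "\<And>\<xi>'. \<xi>' \<in> cyl r s (ipath_prefix r \<xi> n) \<Longrightarrow> \<xi>' \<in> cyl r s (ipath_prefix r \<mu> n)
      \<Longrightarrow> \<not> same_germ t u \<xi>'"
  proof (cases "\<xi> = \<mu>")
    case True
    with germ_eq_iff[OF t(1) u(1)] t(2) u(2) PQ have "\<not> same_germ t u \<xi>" by simp
    with True show thesis
      using not_same_germ_on_cylinder[OF fin t(1)] u(1) that by metis
  next
    case False
    then obtain i where "\<xi> i \<noteq> \<mu> i" by blast
    then show thesis
      by (intro that[of "Suc i"]) (auto simp: cyl_ipath_prefix ipath_prefix_eq_iff)
  qed
  then show "\<exists>U V. openin Tight U \<and> openin Tight V \<and> P \<in> U \<and> Q \<in> V \<and> disjnt U V"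
    using germs_separatedI[OF t(1) u(1)] t(2) u(2) by blast
qed

end

locale row_finite_cocycle_action = cocycle_action G r s av ae phi + row_finite_graph r s
  for G :: "'g monoid" (structure) and r s :: "'e \<Rightarrow> 'v" and av :: "'g \<Rightarrow> 'v \<Rightarrow> 'v"
    and ae :: "'g \<Rightarrow> 'e \<Rightarrow> 'e" and phi :: "'g \<Rightarrow> 'e \<Rightarrow> 'g"
begin

definition vertex_rep :: "'v \<Rightarrow> 'g \<Rightarrow> ('v,'e,'g) selt" where
  "vertex_rep x g = ((x, []), g, (x, []))"

lemma depth_vertex_rep [simp]: "depth (vertex_rep x g) = 0"
  by (simp add: depth_def vertex_rep_def)

lemma Reps_vertex_rep:
  "g \<in> carrier G \<Longrightarrow> av g x = x \<Longrightarrow> is_ipath r s \<xi> \<Longrightarrow> r (\<xi> 0) = x \<Longrightarrow> (vertex_rep x g, \<xi>) \<in> Reps"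
  by (simp add: Reps_iff vertex_rep_def valid_S_def is_fpath_def psrc_def cyl_def)

lemma refine_vertex_rep_eq_iff:
  "refine (vertex_rep x g) \<xi> m = refine (vertex_rep x \<one>) \<xi> m \<longleftrightarrow> strongly_fixes g (map \<xi> [0..<m])"
  by (auto simp: refine_def vertex_rep_def strongly_fixes_def)

lemma same_germ_vertex_reps_on_strongly_fixed:
  assumes "is_fpath r s p" "fst p = x" "strongly_fixes g (snd p)" and \<xi>: "\<xi> \<in> cyl r s p"
  shows "same_germ (vertex_rep x g) (vertex_rep x \<one>) \<xi>"
proof -
  define l where "l = length (snd p)"
  have "p = ipath_prefix r \<xi> l" unfolding l_def by (rule cyl_eq_ipath_prefix[OF \<xi>])
  then have "refine (vertex_rep x g) \<xi> l = refine (vertex_rep x \<one>) \<xi> l"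
    using assms(3) by (simp add: refine_vertex_rep_eq_iff)
  then show ?thesis by (simp add: same_germ_if_refine_eq)
qed

lemma koenig_min_strongly_fixed:
  assumes inf: "infinite {p. min_strongly_fixed G r s av ae phi g p \<and> fst p = x}"
  obtains \<xi> where "is_ipath r s \<xi>" "r (\<xi> 0) = x" "av g x = x"
    and "\<And>n. \<not> strongly_fixes g (map \<xi> [0..<n])"
    and "\<And>n. \<exists>p ys. min_strongly_fixed G r s av ae phi g p \<and> fst p = x \<and> snd p = map \<xi> [0..<n] @ ys"
proof -
  define M where "M = {p. min_strongly_fixed G r s av ae phi g p \<and> fst p = x}"
  have M: "is_fpath r s p" "fst p = x" "av g x = x" if "p \<in> M" for p
    using that by (cases p; auto simp: M_def min_strongly_fixed_def strongly_fixed_iff)+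
  obtain \<xi> where \<xi>: "is_ipath r s \<xi>" "r (\<xi> 0) = x"
    and inf_\<xi>: "\<And>n. infinite (extending M (map \<xi> [0..<n]))"
    using koenig_ipath[of M x] inf M unfolding M_def by blast
  have long: "\<exists>p\<in>M. \<exists>ys. snd p = map \<xi> [0..<n] @ ys \<and> ys \<noteq> []" for n
  proof -
    obtain p where "p \<in> extending M (map \<xi> [0..<n]) - {(x, map \<xi> [0..<n])}"
      using infinite_imp_nonempty[OF infinite_remove[OF inf_\<xi>[of n]]] by blast
    then show ?thesis using M(2) by (cases p) (force simp: extending_def)
  qed
  have "av g x = x" using long[of 0] M(3) by blast
  moreover have "\<not> strongly_fixes g (map \<xi> [0..<n])" for n
  proof
    assume fixed: "strongly_fixes g (map \<xi> [0..<n])"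
    obtain p ys where p: "p \<in> M" "snd p = map \<xi> [0..<n] @ ys" "ys \<noteq> []" using long by blast
    then have "n < length (snd p)" by simp
    then have "\<not> strongly_fixed G av ae phi g (fst p, take n (snd p))"
      using p(1) unfolding M_def min_strongly_fixed_def by blast
    with fixed p(2) M(2)[OF p(1)] \<open>av g x = x\<close> show False
      by (simp add: strongly_fixed_iff)
  qed
  moreover have "\<exists>p ys. min_strongly_fixed G r s av ae phi g p \<and> fst p = x
      \<and> snd p = map \<xi> [0..<n] @ ys" for n
    using long unfolding M_def by blast
  ultimately show thesis using that \<xi> by blast
qed

lemma not_Hausdorff_if_infinite_min_strongly_fixed:
  assumes g: "g \<in> carrier G"
    and inf: "infinite {p. min_strongly_fixed G r s av ae phi g p \<and> fst p = x}"
  shows "\<not> Hausdorff_space Tight"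
proof -
  obtain \<xi> where \<xi>: "is_ipath r s \<xi>" "r (\<xi> 0) = x" and "av g x = x"
    and unfixed: "\<And>n. \<not> strongly_fixes g (map \<xi> [0..<n])"
    and extended: "\<And>n. \<exists>p ys. min_strongly_fixed G r s av ae phi g p \<and> fst p = x
      \<and> snd p = map \<xi> [0..<n] @ ys"
    using koenig_min_strongly_fixed[OF inf] by blast
  define t1 t0 :: "('v,'e,'g) selt" where "t1 = vertex_rep x g" and "t0 = vertex_rep x \<one>"
  have reps: "(t1, \<xi>') \<in> Reps" "(t0, \<xi>') \<in> Reps" if "is_ipath r s \<xi>'" "r (\<xi>' 0) = x" for \<xi>'
    using that Reps_vertex_rep g \<open>av g x = x\<close> by (simp_all add: t1_def t0_def av_one)
  have "Germ t1 \<xi> \<noteq> Germ t0 \<xi>"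
  proof
    assume "Germ t1 \<xi> = Germ t0 \<xi>"
    then have "same_germ t1 t0 \<xi>" using germ_eq_iff[OF reps[OF \<xi>]] by blast
    then obtain m where "refine t1 \<xi> m = refine t0 \<xi> m"
      unfolding same_germ_def eventually_sequentially by blast
    with unfixed show False by (simp add: t1_def t0_def refine_vertex_rep_eq_iff)
  qed
  moreover have "\<exists>\<xi>' \<in> cyl r s (ipath_prefix r \<xi> n).
      (t1, \<xi>') \<in> Reps \<and> (t0, \<xi>') \<in> Reps \<and> same_germ t1 t0 \<xi>'" for n
  proof -
    obtain p ys where p: "min_strongly_fixed G r s av ae phi g p" "fst p = x"
      "snd p = map \<xi> [0..<n] @ ys"
      using extended by blast
    then have "is_fpath r s p" "strongly_fixes g (snd p)"
      by (cases p; simp add: min_strongly_fixed_def strongly_fixed_iff)+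
    then obtain \<xi>' where \<xi>': "\<xi>' \<in> cyl r s p" using cyl_nonempty by blast
    have "is_ipath r s \<xi>'" "r (\<xi>' 0) = x"
      using \<xi>' p(2) by (simp_all add: cyl_def)
    moreover have "\<xi>' \<in> cyl r s (ipath_prefix r \<xi> n)"
      using cyl_subset_cyl_ipath_prefix[of p r \<xi>, OF _ p(3)] p(2) \<xi>(2) \<xi>' by auto
    moreover have "same_germ t1 t0 \<xi>'"
      unfolding t1_def t0_def
      by (rule same_germ_vertex_reps_on_strongly_fixed) fact+
    ultimately show ?thesis using reps by blast
  qed
  ultimately show ?thesis using germs_not_separated reps[OF \<xi>] by blast
qed

end

theorem theorem4p2:
  fixes G :: "'g monoid"
    and r s :: "'e \<Rightarrow> 'v"
    and av :: "'g \<Rightarrow> 'v \<Rightarrow> 'v"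
    and ae :: "'g \<Rightarrow> 'e \<Rightarrow> 'e"
    and phi :: "'g \<Rightarrow> 'e \<Rightarrow> 'g"
  assumes "countable (UNIV :: 'v set)" and "countable (UNIV :: 'e set)"
    and "row_finite_no_sources r"
    and "group G"
    and "graph_action G r s av ae"
    and "one_cocycle G ae phi"
    and "\<forall>g\<in>carrier G. \<forall>a x. av (phi g a) x = av g x"
  shows "(\<forall>g\<in>carrier G. \<forall>x. finite {p. min_strongly_fixed G r s av ae phi g p \<and> fst p = x})
         \<longleftrightarrow> Hausdorff_space (tight_groupoid_topology G r s av ae phi)"
proof -
  interpret row_finite_cocycle_action G r s av ae phi
    using assms by (simp add: row_finite_cocycle_action_def cocycle_action_def
        cocycle_action_axioms_def row_finite_graph_def)
  show ?thesis
    using Hausdorff_if_finite_min_strongly_fixed not_Hausdorff_if_infinite_min_strongly_fixed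
    by blast
qed

end
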